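(* Assume $0<\alpha<\sqrt n$ and $e\in\mathbb{R}^n$ satisfies $\|e\|=\sqrt n$. Let $L$ be a linear subspace, and let $\bar x\ne0$ be a point of $M:=(e+L)\cap\partial K_e(\alpha)$. Let $T_{\bar x}$ denote the tangent space to $M$ at $\bar x$, and let $\theta$ be the angle between $\bar x$ and its orthogonal projection onto $T_{\bar x}$. Then the orthogonal projection $P_{L^\perp}(e)$ of $e$ onto $L^\perp$ satisfies \[ \|P_{L^\perp}(e)\|^2=\frac{(n-\alpha^2)\|\bar x\|^2\sin^2\theta}{n-\alpha^2+(\|\bar x\|-\alpha)^2\sin^2\theta}. \]
   Context: $\mathbb{R}^n$ carries the dot product and Euclidean norm. $K_e(\alpha)=\{x:e^Tx\ge\alpha\|x\|\}$, $\partial$ denotes boundary, $e+L=\{e+v:v\in L\}$, $L^\perp$ is the orthogonal complement of $L$. The tangent space to $M$ at $\bar x$ is $T_{\bar x}=\{v\in L:(e^T\bar x)(e^Tv)-\alpha^2\bar x^Tv=0\}$. *)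

theory Defs
  imports "HOL-Analysis.Analysis"
begin

definition cone_K :: "'a::real_inner \<Rightarrow> real \<Rightarrow> 'a set" where
  "cone_K e \<alpha> = {x. e \<bullet> x \<ge> \<alpha> * norm x}"

definition orth_proj :: "'a::euclidean_space set \<Rightarrow> 'a \<Rightarrow> 'a" where
  "orth_proj S x = closest_point S x"

definition tangent_sp :: "'a::real_inner \<Rightarrow> real \<Rightarrow> 'a set \<Rightarrow> 'a \<Rightarrow> 'a set" where
  "tangent_sp e \<alpha> L xb = {v \<in> L. (e \<bullet> xb) * (e \<bullet> v) - \<alpha>\<^sup>2 * (xb \<bullet> v) = 0}"

definition vec_angle :: "'a::real_inner \<Rightarrow> 'a \<Rightarrow> real" where
  "vec_angle u v = (if u = 0 \<or> v = 0 then pi / 2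
                    else arccos ((u \<bullet> v) / (norm u * norm v)))"

end

theory Submission
  imports Defs
begin

text \<open>Split \<open>e = q + p\<close> and \<open>x = m + p\<close> along \<open>L \<oplus> L\<^sup>\<bottom>\<close>, with \<open>s = \<parallel>p\<parallel>\<^sup>2\<close> the unknown.
  Since \<open>x\<close> lies on the boundary of the cone, \<open>e \<bullet> x = \<alpha> \<parallel>x\<parallel>\<close>, and the tangent space is the
  hyperplane of \<open>L\<close> orthogonal to \<open>u = \<parallel>x\<parallel> q - \<alpha> m \<in> L\<close>. Projecting \<open>x\<close> onto it gives
  \<open>\<parallel>x\<parallel>\<^sup>2 sin\<^sup>2 \<theta> = s + (m \<bullet> u)\<^sup>2 / \<parallel>u\<parallel>\<^sup>2\<close>, and all the inner products of \<open>q\<close> and \<open>m\<close> are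
  expressible through \<open>\<parallel>x\<parallel>\<close>, \<open>\<alpha>\<close>, \<open>\<parallel>e\<parallel>\<close> and \<open>s\<close>; the resulting equation is linear in \<open>s\<close>.\<close>

lemma orth_proj_eqI:
  fixes S :: "'a::euclidean_space set"
  assumes "subspace S" "y \<in> S" "\<And>z. z \<in> S \<Longrightarrow> (x - y) \<bullet> z = 0"
  shows "orth_proj S x = y"
proof -
  have "dist x y \<le> dist x z" if z: "z \<in> S" for z
  proof -
    have "(x - y) \<bullet> (y - z) = 0"
      using assms z by (simp add: subspace_diff)
    then have "(dist x z)\<^sup>2 = (dist x y)\<^sup>2 + (norm (y - z))\<^sup>2"
      unfolding dist_norm power2_norm_eq_inner
      by (smt (verit) diff_add_cancel inner_add_left inner_add_right inner_commute)
    then show ?thesis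
      by (smt (verit) zero_le_dist zero_le_power2 power2_le_imp_le)
  qed
  then have "y = closest_point S x"
    using assms(1,2) by (intro closest_point_unique) (auto simp: subspace_imp_convex closed_subspace)
  then show ?thesis
    by (simp add: orth_proj_def)
qed

lemma orthogonal_comp_inner:
  assumes "p \<in> orthogonal_comp L" "z \<in> L"
  shows "p \<bullet> z = 0"
  using assms by (auto simp: orthogonal_comp_def orthogonal_def inner_commute)

lemma orth_proj_orthogonal_comp_add:
  fixes L :: "'a::euclidean_space set"
  assumes "q \<in> L" "p \<in> orthogonal_comp L"
  shows "orth_proj (orthogonal_comp L) (q + p) = p"
  using assms
  by (intro orth_proj_eqI subspace_orthogonal_comp) (auto simp: orthogonal_comp_def orthogonal_def)

lemma inner_add_orthogonal_comp:
  assumes "a \<in> L" "b \<in> L" "p \<in> orthogonal_comp L"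
  shows "(a + p) \<bullet> (b + p) = a \<bullet> b + p \<bullet> p"
  using assms by (simp add: orthogonal_comp_def orthogonal_def inner_add_left inner_add_right inner_commute)

lemma frontier_cone_K_inner:
  fixes e x :: "'a::real_inner"
  assumes "x \<in> frontier (cone_K e \<alpha>)"
  shows "e \<bullet> x = \<alpha> * norm x"
proof -
  have "closed (cone_K e \<alpha>)"
    unfolding cone_K_def by (intro closed_Collect_le continuous_intros)
  then have "e \<bullet> x \<ge> \<alpha> * norm x"
    using assms by (simp add: frontier_def cone_K_def)
  moreover have "{x. \<alpha> * norm x < e \<bullet> x} \<subseteq> interior (cone_K e \<alpha>)"
    by (intro interior_maximal open_Collect_less continuous_intros) (auto simp: cone_K_def)
  then have "\<not> \<alpha> * norm x < e \<bullet> x"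
    using assms by (auto simp: frontier_def)
  ultimately show ?thesis
    by simp
qed

lemma tangent_sp_eq_hyperplane:
  assumes "\<alpha> \<noteq> 0" "e = q + p" "x = m + p" "p \<in> orthogonal_comp L"
    and "e \<bullet> x = \<alpha> * norm x"
  shows "tangent_sp e \<alpha> L x = {v \<in> L. (norm x *\<^sub>R q - \<alpha> *\<^sub>R m) \<bullet> v = 0}"
proof -
  have "(e \<bullet> x) * (e \<bullet> v) - \<alpha>\<^sup>2 * (x \<bullet> v) = \<alpha> * ((norm x *\<^sub>R q - \<alpha> *\<^sub>R m) \<bullet> v)"
    if "v \<in> L" for v
  proof -
    have "p \<bullet> v = 0"
      using assms(4) that by (rule orthogonal_comp_inner)
    then show ?thesis
      using assms(2,3,5) by (simp add: inner_add_left inner_diff_left algebra_simps power2_eq_square)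
  qed
  then have iff: "(e \<bullet> x) * (e \<bullet> v) - \<alpha>\<^sup>2 * (x \<bullet> v) = 0 \<longleftrightarrow> (norm x *\<^sub>R q - \<alpha> *\<^sub>R m) \<bullet> v = 0"
    if "v \<in> L" for v
    using assms(1) that by simp
  show ?thesis
    unfolding tangent_sp_def using iff by blast
qed

lemma orth_proj_hyperplane:
  fixes L :: "'a::euclidean_space set"
  assumes "subspace L" "u \<in> L" "u \<noteq> 0" "m \<in> L" "p \<in> orthogonal_comp L"
  defines "y \<equiv> m - ((m \<bullet> u) / (u \<bullet> u)) *\<^sub>R u"
  shows "orth_proj {v \<in> L. u \<bullet> v = 0} (m + p) = y"
    and "(m + p - y) \<bullet> y = 0"
    and "(norm (m + p - y))\<^sup>2 = p \<bullet> p + (m \<bullet> u)\<^sup>2 / (u \<bullet> u)"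
proof -
  have pL: "p \<bullet> z = 0" if "z \<in> L" for z
    using assms(5) that by (rule orthogonal_comp_inner)
  have residual: "m + p - y = p + ((m \<bullet> u) / (u \<bullet> u)) *\<^sub>R u"
    by (simp add: y_def)
  have "{v \<in> L. u \<bullet> v = 0} = L \<inter> {v. u \<bullet> v = 0}"
    by blast
  then have "subspace {v \<in> L. u \<bullet> v = 0}"
    using assms(1) subspace_hyperplane by (metis subspace_inter)
  moreover have "y \<in> L"
    unfolding y_def using assms(1,2,4) by (intro subspace_diff subspace_scale)
  moreover have "u \<bullet> y = 0"
    using assms(3) by (simp add: y_def inner_diff_right inner_commute)
  moreover have "(m + p - y) \<bullet> z = 0" if "z \<in> L" "u \<bullet> z = 0" for z
    using that pL[of z] by (simp add: residual inner_add_left)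
  ultimately show "orth_proj {v \<in> L. u \<bullet> v = 0} (m + p) = y" "(m + p - y) \<bullet> y = 0"
    by (auto intro: orth_proj_eqI)
  have "p \<bullet> u = 0" "u \<bullet> p = 0"
    using pL[OF assms(2)] by (auto simp: inner_commute)
  then show "(norm (m + p - y))\<^sup>2 = p \<bullet> p + (m \<bullet> u)\<^sup>2 / (u \<bullet> u)"
    using assms(3) unfolding residual power2_norm_eq_inner
    by (simp add: inner_add_left inner_add_right power2_eq_square)
qed

lemma sin_sq_vec_angle_orthogonal:
  fixes x y :: "'a::real_inner"
  assumes "x \<noteq> 0" "(x - y) \<bullet> y = 0"
  shows "(norm x)\<^sup>2 * (sin (vec_angle x y))\<^sup>2 = (norm (x - y))\<^sup>2"
proof (cases "y = 0")
  case True
  then show ?thesis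
    by (simp add: vec_angle_def)
next
  case False
  have pythagoras: "(norm x)\<^sup>2 = (norm (x - y))\<^sup>2 + (norm y)\<^sup>2"
    using assms(2) unfolding power2_norm_eq_inner
    by (smt (verit) diff_add_cancel inner_add_left inner_add_right inner_commute)
  then have ratio: "0 \<le> norm y / norm x" "norm y / norm x \<le> 1"
    using assms(1) by (auto simp: divide_le_eq_1 intro: power2_le_imp_le)
  have "(x \<bullet> y) / (norm x * norm y) = norm y / norm x"
    using assms(2) False by (simp add: inner_diff_left power2_norm_eq_inner[symmetric] power2_eq_square)
  then have "(sin (vec_angle x y))\<^sup>2 = 1 - (norm y / norm x)\<^sup>2"
    using assms(1) False ratio
    by (simp add: vec_angle_def sin_arccos_abs power_le_one)
  then show ?thesis
    using assms(1) pythagoras by (simp add: field_simps)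
qed

lemma tangent_normal_inner:
  fixes q m :: "'a::real_inner"
  assumes qq: "q \<bullet> q = c - s" and qm: "q \<bullet> m = \<alpha> * r - s" and mm: "m \<bullet> m = r\<^sup>2 - s"
  defines "u \<equiv> r *\<^sub>R q - \<alpha> *\<^sub>R m"
  shows "u \<bullet> u = r\<^sup>2 * (c - \<alpha>\<^sup>2) - (r - \<alpha>)\<^sup>2 * s"
    and "m \<bullet> u = - ((r - \<alpha>) * s)"
    and "q \<bullet> u = r * (c - \<alpha>\<^sup>2) - (r - \<alpha>) * s"
proof -
  have mq: "m \<bullet> q = \<alpha> * r - s"
    using qm by (simp add: inner_commute)
  have "u \<bullet> u = r * r * (q \<bullet> q) - r * \<alpha> * (q \<bullet> m) - \<alpha> * r * (m \<bullet> q) + \<alpha> * \<alpha> * (m \<bullet> m)"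
    by (simp add: u_def inner_diff_left inner_diff_right algebra_simps)
  then show "u \<bullet> u = r\<^sup>2 * (c - \<alpha>\<^sup>2) - (r - \<alpha>)\<^sup>2 * s"
    unfolding qq qm mq mm by (simp add: algebra_simps power2_eq_square)
  have "m \<bullet> u = r * (m \<bullet> q) - \<alpha> * (m \<bullet> m)"
    by (simp add: u_def inner_diff_right)
  then show "m \<bullet> u = - ((r - \<alpha>) * s)"
    unfolding mq mm by (simp add: algebra_simps power2_eq_square)
  have "q \<bullet> u = r * (q \<bullet> q) - \<alpha> * (q \<bullet> m)"
    by (simp add: u_def inner_diff_right)
  then show "q \<bullet> u = r * (c - \<alpha>\<^sup>2) - (r - \<alpha>) * s"
    unfolding qq qm by (simp add: algebra_simps power2_eq_square)
qed

lemma solve_sin_sq_relation: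
  fixes s r N c S :: real
  assumes "N > 0" "r > 0" "r\<^sup>2 * N - c * s > 0" "c \<ge> 0" "S \<ge> 0"
    and "r\<^sup>2 * S = s + s\<^sup>2 * c / (r\<^sup>2 * N - c * s)"
  shows "s = (N * r\<^sup>2 * S) / (N + c * S)"
proof -
  have "r\<^sup>2 * S * (r\<^sup>2 * N - c * s) = r\<^sup>2 * N * s"
    using assms(3,6) by (simp add: field_simps power2_eq_square)
  then have "r\<^sup>2 * (s * (N + c * S)) = r\<^sup>2 * (N * r\<^sup>2 * S)"
    by algebra
  then have "s * (N + c * S) = N * r\<^sup>2 * S"
    using assms(2) by simp
  moreover have "N + c * S > 0"
    using assms(1,4,5) by (simp add: add_pos_nonneg)
  ultimately show ?thesis
    by (simp add: eq_divide_eq)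
qed

lemma sin_sq_tangent_angle_relation:
  fixes e x :: "'a::euclidean_space"
  assumes "0 < \<alpha>" "\<alpha> < norm e" "subspace L" "x \<noteq> 0" "e \<bullet> x = \<alpha> * norm x"
    and q: "q \<in> L" and p: "p \<in> orthogonal_comp L" and e: "e = q + p"
    and m: "m \<in> L" and x: "x = m + p"
  defines "r \<equiv> norm x" and "s \<equiv> p \<bullet> p" and "c \<equiv> (norm e)\<^sup>2"
  shows "r\<^sup>2 * (c - \<alpha>\<^sup>2) - (r - \<alpha>)\<^sup>2 * s > 0"
    and "r\<^sup>2 * (sin (vec_angle x (orth_proj (tangent_sp e \<alpha> L x) x)))\<^sup>2
      = s + s\<^sup>2 * (r - \<alpha>)\<^sup>2 / (r\<^sup>2 * (c - \<alpha>\<^sup>2) - (r - \<alpha>)\<^sup>2 * s)"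
proof -
  define u where "u = r *\<^sub>R q - \<alpha> *\<^sub>R m"
  have "c = q \<bullet> q + s" "e \<bullet> x = q \<bullet> m + s" "r\<^sup>2 = m \<bullet> m + s"
    using inner_add_orthogonal_comp[OF q q p] inner_add_orthogonal_comp[OF q m p]
      inner_add_orthogonal_comp[OF m m p]
    by (simp_all add: e x c_def r_def s_def power2_norm_eq_inner)
  then have gram: "q \<bullet> q = c - s" "q \<bullet> m = \<alpha> * r - s" "m \<bullet> m = r\<^sup>2 - s"
    using assms(5) by (simp_all add: r_def)
  note u_inner = tangent_normal_inner[OF gram, folded u_def]
  have "r > 0" "c - \<alpha>\<^sup>2 > 0"
    using assms(1,2,4) by (auto simp: r_def c_def power_strict_mono)
  then have "u \<noteq> 0"
    using u_inner(2,3) by auto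
  then show "r\<^sup>2 * (c - \<alpha>\<^sup>2) - (r - \<alpha>)\<^sup>2 * s > 0"
    using u_inner(1) inner_gt_zero_iff[of u] by linarith
  have uL: "u \<in> L"
    unfolding u_def using assms(3) q m by (intro subspace_diff subspace_scale)
  define y where "y = m - ((m \<bullet> u) / (u \<bullet> u)) *\<^sub>R u"
  note proj = orth_proj_hyperplane[OF assms(3) uL \<open>u \<noteq> 0\<close> m p, folded y_def x]
  have tangent: "tangent_sp e \<alpha> L x = {v \<in> L. u \<bullet> v = 0}"
    unfolding u_def r_def using assms(1,5) e x p by (intro tangent_sp_eq_hyperplane) auto
  have "r\<^sup>2 * (sin (vec_angle x (orth_proj (tangent_sp e \<alpha> L x) x)))\<^sup>2 = (norm (x - y))\<^sup>2"
    unfolding r_def tangent proj(1) by (rule sin_sq_vec_angle_orthogonal[OF assms(4) proj(2)])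
  also have "\<dots> = s + s\<^sup>2 * (r - \<alpha>)\<^sup>2 / (r\<^sup>2 * (c - \<alpha>\<^sup>2) - (r - \<alpha>)\<^sup>2 * s)"
    using proj(3) u_inner by (simp add: s_def power_mult_distrib)
  finally show "r\<^sup>2 * (sin (vec_angle x (orth_proj (tangent_sp e \<alpha> L x) x)))\<^sup>2
      = s + s\<^sup>2 * (r - \<alpha>)\<^sup>2 / (r\<^sup>2 * (c - \<alpha>\<^sup>2) - (r - \<alpha>)\<^sup>2 * s)" .
qed

lemma norm_orth_proj_orthogonal_comp_cone_frontier:
  fixes e x :: "'a::euclidean_space"
  assumes "0 < \<alpha>" "\<alpha> < norm e" "subspace L"
    and "x \<in> ((\<lambda>v. e + v) ` L) \<inter> frontier (cone_K e \<alpha>)" "x \<noteq> 0"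
  defines "S \<equiv> (sin (vec_angle x (orth_proj (tangent_sp e \<alpha> L x) x)))\<^sup>2"
  shows "(norm (orth_proj (orthogonal_comp L) e))\<^sup>2 =
    ((norm e)\<^sup>2 - \<alpha>\<^sup>2) * (norm x)\<^sup>2 * S / ((norm e)\<^sup>2 - \<alpha>\<^sup>2 + (norm x - \<alpha>)\<^sup>2 * S)"
proof -
  obtain q p where q: "q \<in> L" and p: "p \<in> orthogonal_comp L" and e: "e = q + p"
    using subspace_sum_orthogonal_comp[OF assms(3)] by (metis UNIV_I set_plus_elim)
  obtain l where "l \<in> L" "x = e + l"
    using assms(4) by auto
  then obtain m where m: "m \<in> L" and x: "x = m + p"
    using q e assms(3) by (metis add.assoc add.commute subspace_add)
  have "e \<bullet> x = \<alpha> * norm x"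
    using assms(4) frontier_cone_K_inner by blast
  note relation = sin_sq_tangent_angle_relation[OF assms(1-3,5) this q p e m x, folded S_def]
  have "(norm e)\<^sup>2 - \<alpha>\<^sup>2 > 0" "norm x > 0"
    using assms(1,2,5) by (auto simp: power_strict_mono)
  moreover have "(norm (orth_proj (orthogonal_comp L) e))\<^sup>2 = p \<bullet> p"
    using orth_proj_orthogonal_comp_add[OF q p] by (simp add: e power2_norm_eq_inner)
  ultimately show ?thesis
    using solve_sin_sq_relation[OF _ _ relation(1) _ _ relation(2)] by (simp add: S_def)
qed

theorem lemma5p3:
  fixes e xb :: "real ^ 'n" and \<alpha> :: real and L :: "(real ^ 'n) set"
  assumes "0 < \<alpha>" and "\<alpha> < sqrt (real CARD('n))"
    and "norm e = sqrt (real CARD('n))"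
    and "subspace L"
    and "xb \<in> ((\<lambda>v. e + v) ` L) \<inter> frontier (cone_K e \<alpha>)"
    and "xb \<noteq> 0"
  shows "(norm (orth_proj (orthogonal_comp L) e))\<^sup>2 =
    ((real CARD('n) - \<alpha>\<^sup>2) * (norm xb)\<^sup>2
        * (sin (vec_angle xb (orth_proj (tangent_sp e \<alpha> L xb) xb)))\<^sup>2)
    / (real CARD('n) - \<alpha>\<^sup>2
        + (norm xb - \<alpha>)\<^sup>2 * (sin (vec_angle xb (orth_proj (tangent_sp e \<alpha> L xb) xb)))\<^sup>2)"
  using norm_orth_proj_orthogonal_comp_cone_frontier[of \<alpha> e L xb] assms by simp

end
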